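(* Let $A\ge1$ be an integer, $N=2A$, and let $\mathbf{m}=(m_0,\dots,m_N)^\top$ with $m_A=N$ and $m_i=0$ for $i\ne A$; let $\mathbf{M}=\mathrm{diag}(m_0,\dots,m_N)$. Let $\mathbf{Q}_N$ be the tridiagonal matrix with $(\mathbf{Q}_N)_{kk}=-N$, $(\mathbf{Q}_N)_{k+1,k}=N-k$, $(\mathbf{Q}_N)_{k-1,k}=k$ (indices $0,\dots,N$) and zeros elsewhere. For $\mu\ge0$ let $\overline{m}(\mu)$ be the dominant (largest) eigenvalue of $\mathbf{M}+\mu\mathbf{Q}_N$ and $\overline{r}(\mu)=\overline{m}(\mu)/N$. Then for each fixed $\mu\ge0$, $$\lim_{A\to\infty}\overline{r}(\mu)=\sqrt{\mu^2+1}-\mu.$$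
   Context: $\overline{m}(\mu)$ equals the mean fitness $\mathbf{m}\cdot\mathbf{p}$ of the positive normalized eigenvector $\mathbf{p}$ of $\mathbf{M}+\mu\mathbf{Q}_N$ (Crow–Kimura quasispecies model with permutation invariant fitness landscape). *)

theory Defs
  imports "Jordan_Normal_Form.Char_Poly"
begin

definition fit :: "nat \<Rightarrow> nat \<Rightarrow> real" where
  "fit A i = (if i = A then real (2 * A) else 0)"

definition M_mat :: "nat \<Rightarrow> real mat" where
  "M_mat A = mat (2 * A + 1) (2 * A + 1) (\<lambda>(i, j). if i = j then fit A i else 0)"

definition Q_mat :: "nat \<Rightarrow> real mat" where
  "Q_mat N = mat (N + 1) (N + 1) (\<lambda>(i, j).
      if i = j then - real N
      else if i = j + 1 then real N - real j
      else if j = i + 1 then real j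
      else 0)"

definition dom_eig :: "real mat \<Rightarrow> real" where
  "dom_eig B = Max {k. eigenvalue B k}"

definition mbar :: "nat \<Rightarrow> real \<Rightarrow> real" where
  "mbar A \<mu> = dom_eig (M_mat A + \<mu> \<cdot>\<^sub>m Q_mat (2 * A))"

definition rbar :: "nat \<Rightarrow> real \<Rightarrow> real" where
  "rbar A \<mu> = mbar A \<mu> / real (2 * A)"

end

theory Submission
  imports Defs "Jordan_Normal_Form.Spectral_Radius"
begin

text \<open>The matrix \<open>M + \<mu> Q\<^sub>N\<close> is tridiagonal with positive off-diagonal entries.
  Its eigenvalues are the roots of the defect left in the last row when the eigenvalue equation
  is solved by forward recursion from the first row, and one root has a positive eigenvector.
  Hence a positive vector \<open>u\<close> with \<open>(M + \<mu> Q\<^sub>N) u \<le> C u\<close> bounds every eigenvalue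
  by \<open>C\<close>, while a nonnegative nonzero \<open>w\<close> with \<open>(M + \<mu> Q\<^sub>N) w \<ge> r w\<close> puts an
  eigenvalue above \<open>r\<close>: pair \<open>w\<close> with the positive eigenvector in the inner product
  weighted by the reciprocal binomial coefficients, which makes the matrix symmetric.

  Let \<open>x \<in> (0, 1)\<close> solve \<open>\<mu> x\<^sup>2 + 2 x = \<mu>\<close>, so that
  \<open>1 - \<mu> + \<mu> x = sqrt (\<mu>\<^sup>2 + 1) - \<mu>\<close>. The test vector \<open>x ^ |k - A|\<close> shows
  that the dominant eigenvalue is at most \<open>N (1 - \<mu> + \<mu> x) + 2 \<mu>\<close>; truncations of
  \<open>y ^ |k - A|\<close> with \<open>y\<close> slightly below \<open>x\<close> show that it is at least
  \<open>N (1 - \<mu> + \<mu> x - \<epsilon>)\<close> once \<open>A\<close> is large.\<close>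

section \<open>Tridiagonal matrices with positive off-diagonal entries\<close>

text \<open>\<open>x, y, z\<close> are consecutive values of a shooting solution and \<open>u, v, w\<close> those of a
  supersolution: the ratio of the former to the latter keeps increasing.\<close>

lemma shooting_ratio_step:
  fixes c d e x y z u v w :: real
  assumes "0 < c" "0 < d" "0 < y" "x * v < y * u"
    and "c * w < e * v - d * u" "c * z = e * y - d * x"
  shows "y * w < z * v"
proof -
  have "y * (c * w) < y * (e * v - d * u)"
    using assms(3,5) by simp
  moreover have "d * (x * v) < d * (y * u)"
    using assms(2,4) by simp
  moreover have "c * (z * v) = e * y * v - d * (x * v)"
    using assms(6) by (metis mult.assoc right_diff_distrib' mult.commute)
  ultimately have "c * (y * w) < c * (z * v)"
    by (simp add: algebra_simps)
  then show ?thesis using assms(1) by simp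
qed

locale tridiagonal =
  fixes n :: nat and a c d :: "nat \<Rightarrow> real"
  assumes dim_ge_2: "2 \<le> n"
    and super_pos: "\<And>k. k + 1 < n \<Longrightarrow> 0 < c k"
    and sub_pos: "\<And>k. 0 < k \<Longrightarrow> k < n \<Longrightarrow> 0 < d k"
begin

definition tri_mat :: "real mat" where
  "tri_mat = mat n n (\<lambda>(i, j).
     if i = j then a i else if i = j + 1 then d i else if j = i + 1 then c i else 0)"

definition tri_act :: "(nat \<Rightarrow> real) \<Rightarrow> nat \<Rightarrow> real" where
  "tri_act w k = a k * w k + (if 0 < k then d k * w (k - 1) else 0)
     + (if k + 1 < n then c k * w (k + 1) else 0)"

lemma tri_mat_carrier: "tri_mat \<in> carrier_mat n n"
  unfolding tri_mat_def by simp

lemma tri_mat_mult_vec: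
  assumes "k < n"
  shows "(tri_mat *\<^sub>v vec n w) $ k = tri_act w k"
proof -
  have "(tri_mat *\<^sub>v vec n w) $ k = (\<Sum>j<n. (if k = j then a k else if k = j + 1 then d k
      else if j = k + 1 then c k else 0) * w j)"
    using assms unfolding tri_mat_def by (simp add: scalar_prod_def lessThan_atLeast0)
  also have "\<dots> = (\<Sum>j<n. (if j = k then a k * w j else 0)
      + (if 0 < k \<and> j = k - 1 then d k * w j else 0) + (if j = k + 1 then c k * w j else 0))"
    by (rule sum.cong) auto
  also have "\<dots> = tri_act w k"
    unfolding sum.distrib tri_act_def using assms by (auto simp: sum.delta')
  finally show ?thesis .
qed

text \<open>Shooting: \<open>shoot l\<close> is the solution of the first \<open>n - 1\<close> rows of
  \<open>tri_act w = l * w\<close> normalised by \<open>w 0 = 1\<close>; the last row then fails exactly by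
  \<open>shoot_defect l\<close>.\<close>

fun shoot :: "real \<Rightarrow> nat \<Rightarrow> real" where
  "shoot l 0 = 1"
| "shoot l (Suc 0) = (l - a 0) / c 0"
| "shoot l (Suc (Suc k)) = ((l - a (Suc k)) * shoot l (Suc k) - d (Suc k) * shoot l k) / c (Suc k)"

definition shoot_defect :: "real \<Rightarrow> real" where
  "shoot_defect l = (l - a (n - 1)) * shoot l (n - 1) - d (n - 1) * shoot l (n - 2)"

lemma tri_act_shoot:
  assumes "k < n"
  shows "tri_act (shoot l) k = l * shoot l k - (if k = n - 1 then shoot_defect l else 0)"
proof (cases "k + 1 < n")
  case True
  then show ?thesis
  proof (cases k)
    case 0
    then show ?thesis using True super_pos[of 0] by (simp add: tri_act_def field_simps)
  next
    case (Suc j)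
    then show ?thesis using True super_pos[of k] by (simp add: tri_act_def field_simps)
  qed
next
  case False
  then have "k = n - 1" "k - 1 = n - 2" using assms by auto
  then show ?thesis using dim_ge_2 unfolding tri_act_def shoot_defect_def by (simp add: algebra_simps)
qed

lemma row_solution_eq_shoot:
  assumes rows: "\<And>k. k + 1 < n \<Longrightarrow> tri_act w k = l * w k" and "k < n"
  shows "w k = w 0 * shoot l k"
  using assms(2)
proof (induction k rule: induct_nat_012)
  case 1
  have "c 0 * w 1 = (l - a 0) * w 0"
    using rows[of 0] 1 by (simp add: tri_act_def algebra_simps)
  then show ?case
    using super_pos[of 0] 1 by (simp add: field_simps)
next
  case (ge2 k)
  have "c (Suc k) * w (Suc (Suc k)) = (l - a (Suc k)) * w (Suc k) - d (Suc k) * w k"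
    using rows[of "Suc k"] ge2.prems by (simp add: tri_act_def algebra_simps)
  then show ?case
    using ge2 super_pos[of "Suc k"] by (simp add: field_simps)
qed simp

lemma eigenvalue_iff_defect_zero: "eigenvalue tri_mat l \<longleftrightarrow> shoot_defect l = 0"
proof
  assume "eigenvalue tri_mat l"
  then obtain v where v: "v \<in> carrier_vec n" "v \<noteq> 0\<^sub>v n" "tri_mat *\<^sub>v v = l \<cdot>\<^sub>v v"
    unfolding eigenvalue_def eigenvector_def using tri_mat_carrier by auto
  define w where "w i = v $ i" for i
  have v_eq: "v = vec n w" using v(1) unfolding w_def by auto
  have rows: "tri_act w k = l * w k" if "k < n" for k
    using tri_mat_mult_vec[OF that, of w] v(3) that unfolding v_eq by simp
  have w_eq: "w k = w 0 * shoot l k" if "k < n" for k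
    using row_solution_eq_shoot[OF rows that] by simp
  have "w 0 \<noteq> 0"
  proof
    assume "w 0 = 0"
    then have "v = 0\<^sub>v n" using w_eq unfolding v_eq by (auto intro!: eq_vecI)
    then show False using v(2) by simp
  qed
  have last: "n - 1 < n" using dim_ge_2 by simp
  have "tri_act w (n - 1) = w 0 * tri_act (shoot l) (n - 1)"
    using w_eq[of "n - 1"] w_eq[of "n - 2"] dim_ge_2
    unfolding tri_act_def by (simp add: algebra_simps numeral_2_eq_2)
  then have "w 0 * (l * shoot l (n - 1) - shoot_defect l) = l * w (n - 1)"
    using rows[OF last] tri_act_shoot[OF last, of l] by simp
  then have "w 0 * shoot_defect l = 0"
    using w_eq[OF last] by (simp add: algebra_simps)
  with \<open>w 0 \<noteq> 0\<close> show "shoot_defect l = 0" by simp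
next
  assume defect: "shoot_defect l = 0"
  show "eigenvalue tri_mat l"
    unfolding eigenvalue_def eigenvector_def
  proof (intro exI conjI)
    show "vec n (shoot l) \<in> carrier_vec (dim_row tri_mat)" using tri_mat_carrier by simp
    have "vec n (shoot l) $ 0 \<noteq> 0\<^sub>v n $ 0" using dim_ge_2 by simp
    then show "vec n (shoot l) \<noteq> 0\<^sub>v (dim_row tri_mat)" using tri_mat_carrier by auto
    show "tri_mat *\<^sub>v vec n (shoot l) = l \<cdot>\<^sub>v vec n (shoot l)"
      by (rule eq_vecI) (use tri_mat_carrier tri_act_shoot defect tri_mat_mult_vec in auto)
  qed
qed

lemma isCont_shoot: "isCont (\<lambda>l. shoot l k) x"
proof -
  have "isCont (\<lambda>l. shoot l k) x \<and> isCont (\<lambda>l. shoot l (Suc k)) x"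
    by (induction k) (auto simp: divide_inverse intro!: continuous_intros)
  then show ?thesis ..
qed

lemma isCont_shoot_defect: "isCont shoot_defect x"
  unfolding shoot_defect_def by (auto intro!: continuous_intros isCont_shoot)

context
  fixes u :: "nat \<Rightarrow> real" and C :: real
  assumes u_pos: "\<And>k. k < n \<Longrightarrow> 0 < u k"
    and u_super: "\<And>k. k < n \<Longrightarrow> tri_act u k \<le> C * u k"
begin

lemma supersolution_shoot_ratio:
  assumes "C < l" "Suc k < n"
  shows "0 < shoot l (Suc k) \<and> shoot l k * u (Suc k) < shoot l (Suc k) * u k"
  using assms(2)
proof (induction k)
  case 0
  have "a 0 * u 0 + c 0 * u 1 \<le> C * u 0"
    using u_super[of 0] 0 by (simp add: tri_act_def)
  moreover have "C * u 0 < l * u 0"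
    using assms(1) u_pos[of 0] 0 by simp
  ultimately have "u (Suc 0) * c 0 < (l - a 0) * u 0"
    by (simp add: algebra_simps)
  then have ratio: "u (Suc 0) < shoot l (Suc 0) * u 0"
    using super_pos[of 0] 0 by (simp add: field_simps)
  then have "0 < shoot l (Suc 0) * u 0"
    using u_pos[of 1] 0 by simp
  then have "0 < shoot l (Suc 0)"
    using u_pos[of 0] 0 zero_less_mult_pos2 by blast
  with ratio show ?case by simp
next
  case (Suc k)
  let ?e = "l - a (Suc k)"
  have "d (Suc k) * u k + a (Suc k) * u (Suc k) + c (Suc k) * u (Suc (Suc k)) \<le> C * u (Suc k)"
    using u_super[of "Suc k"] Suc.prems by (simp add: tri_act_def algebra_simps)
  moreover have "C * u (Suc k) < l * u (Suc k)"
    using assms(1) u_pos[of "Suc k"] Suc.prems by simp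
  ultimately have row: "c (Suc k) * u (Suc (Suc k)) < ?e * u (Suc k) - d (Suc k) * u k"
    by (simp add: algebra_simps)
  have recurrence: "c (Suc k) * shoot l (Suc (Suc k)) = ?e * shoot l (Suc k) - d (Suc k) * shoot l k"
    using super_pos[of "Suc k"] Suc.prems by simp
  have IH: "0 < shoot l (Suc k)" "shoot l k * u (Suc k) < shoot l (Suc k) * u k"
    using Suc by auto
  have "0 < c (Suc k)" "0 < d (Suc k)"
    using super_pos[of "Suc k"] sub_pos[of "Suc k"] Suc.prems by auto
  from shooting_ratio_step[OF this IH row recurrence]
  have ratio: "shoot l (Suc k) * u (Suc (Suc k)) < shoot l (Suc (Suc k)) * u (Suc k)" .
  moreover have "0 < shoot l (Suc k) * u (Suc (Suc k))"
    using IH(1) u_pos[of "Suc (Suc k)"] Suc.prems by simp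
  ultimately have "0 < shoot l (Suc (Suc k)) * u (Suc k)" by linarith
  moreover have "0 < u (Suc k)" using u_pos[of "Suc k"] Suc.prems by simp
  ultimately have "0 < shoot l (Suc (Suc k))"
    using zero_less_mult_pos2 by blast
  with ratio show ?case by blast
qed

lemma supersolution_shoot_pos:
  assumes "C < l" "k < n"
  shows "0 < shoot l k"
  using supersolution_shoot_ratio[OF assms(1), of "k - 1"] assms(2) by (cases k) auto

lemma supersolution_defect_pos:
  assumes "C < l"
  shows "0 < shoot_defect l"
proof -
  obtain m where n: "n = Suc (Suc m)" using dim_ge_2 by (metis add_2_eq_Suc le_Suc_ex)
  let ?e = "l - a (Suc m)"
  have "d (Suc m) * u m + a (Suc m) * u (Suc m) \<le> C * u (Suc m)"
    using u_super[of "Suc m"] unfolding tri_act_def by (simp add: n algebra_simps)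
  moreover have "C * u (Suc m) < l * u (Suc m)"
    using assms u_pos[of "Suc m"] by (simp add: n)
  ultimately have row: "1 * 0 < ?e * u (Suc m) - d (Suc m) * u m"
    by (simp add: algebra_simps)
  have defect: "1 * shoot_defect l = ?e * shoot l (Suc m) - d (Suc m) * shoot l m"
    unfolding shoot_defect_def by (simp add: n)
  have ratio: "0 < shoot l (Suc m)" "shoot l m * u (Suc m) < shoot l (Suc m) * u m"
    using supersolution_shoot_ratio[OF assms, of m] by (auto simp: n)
  have dp: "0 < d (Suc m)" using sub_pos[of "Suc m"] by (simp add: n)
  have "shoot l (Suc m) * 0 < shoot_defect l * u (Suc m)"
    by (rule shooting_ratio_step[where c = 1 and d = "d (Suc m)" and x = "shoot l m"
        and u = "u m" and e = ?e]) (use dp ratio row defect in simp_all)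
  then show ?thesis using u_pos[of "Suc m"] by (simp add: n zero_less_mult_iff)
qed

lemma eigenvalue_le_supersolution:
  assumes "eigenvalue tri_mat l"
  shows "l \<le> C"
  using supersolution_defect_pos[of l] assms eigenvalue_iff_defect_zero by force

end

text \<open>The intermediate value theorem applied to \<open>\<lambda>l. margin l n\<close> produces a root of the
  defect whose shooting solution is positive.\<close>

fun margin :: "real \<Rightarrow> nat \<Rightarrow> real" where
  "margin l 0 = shoot_defect l"
| "margin l (Suc k) = min (margin l k) (shoot l k)"

lemma margin_pos_iff: "0 < margin l k \<longleftrightarrow> 0 < shoot_defect l \<and> (\<forall>i<k. 0 < shoot l i)"
  by (induction k) (auto simp: less_Suc_eq)

lemma margin_nonneg_iff: "0 \<le> margin l k \<longleftrightarrow> 0 \<le> shoot_defect l \<and> (\<forall>i<k. 0 \<le> shoot l i)"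
  by (induction k) (auto simp: less_Suc_eq)

lemma isCont_margin: "isCont (\<lambda>l. margin l k) x"
  by (induction k) (auto intro!: continuous_intros isCont_shoot isCont_shoot_defect)

lemma shoot_nonneg_imp_pos:
  assumes nonneg: "0 \<le> shoot_defect x" "\<And>k. k < n \<Longrightarrow> 0 \<le> shoot x k"
    and "k < n"
  shows "0 < shoot x k"
  using assms(3)
proof (induction k)
  case (Suc k)
  show ?case
  proof (rule ccontr)
    assume "\<not> 0 < shoot x (Suc k)"
    then have zero: "shoot x (Suc k) = 0" using nonneg(2)[OF Suc.prems] by simp
    have IH: "0 < shoot x k" and dp: "0 < d (Suc k)"
      using Suc sub_pos[of "Suc k"] by auto
    show False
    proof (cases "Suc (Suc k) < n")
      case True
      then have "shoot x (Suc (Suc k)) < 0"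
        using zero IH dp super_pos[of "Suc k"] by (simp add: divide_neg_pos)
      then show False using nonneg(2)[OF True] by simp
    next
      case False
      then have "n - 1 = Suc k" "n - 2 = k" using Suc.prems by auto
      then have "shoot_defect x < 0"
        using zero IH dp unfolding shoot_defect_def by simp
      then show False using nonneg(1) by simp
    qed
  qed
qed simp

lemma exists_positive_shoot_root:
  obtains x where "shoot_defect x = 0" "\<And>k. k < n \<Longrightarrow> 0 < shoot x k"
proof -
  define C where "C = Max (tri_act (\<lambda>_. 1) ` {..<n})"
  have super: "tri_act (\<lambda>_. 1) k \<le> C * 1" if "k < n" for k
    unfolding C_def using that by simp
  define lo where "lo = min (a 0 - 1) (C + 1)"
  have "0 < margin (C + 1) n"
    unfolding margin_pos_iff
    using supersolution_defect_pos[OF _ super] supersolution_shoot_pos[OF _ super] by auto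
  moreover have "margin lo n \<le> 0"
  proof -
    have "shoot lo 1 < 0" using super_pos[of 0] dim_ge_2 unfolding lo_def
      by (simp add: divide_neg_pos)
    moreover have "1 < n" using dim_ge_2 by simp
    ultimately show ?thesis using margin_pos_iff[of lo n] by force
  qed
  moreover have "lo \<le> C + 1" unfolding lo_def by simp
  ultimately obtain x where "margin x n = 0"
    using IVT[of "\<lambda>l. margin l n" lo 0 "C + 1"] isCont_margin by fastforce
  then have nonneg: "0 \<le> shoot_defect x" "\<And>k. k < n \<Longrightarrow> 0 \<le> shoot x k"
    and not_pos: "\<not> (0 < shoot_defect x \<and> (\<forall>k<n. 0 < shoot x k))"
    using margin_nonneg_iff[of x n] margin_pos_iff[of x n] by auto
  then show ?thesis using that shoot_nonneg_imp_pos by force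
qed

lemma finite_eigenvalues: "finite {l. eigenvalue tri_mat l}"
  using card_finite_spectrum(1)[OF tri_mat_carrier] unfolding spectrum_def .

lemma dom_eig_le_supersolution:
  assumes "\<And>k. k < n \<Longrightarrow> 0 < u k" "\<And>k. k < n \<Longrightarrow> tri_act u k \<le> C * u k"
  shows "dom_eig tri_mat \<le> C"
proof -
  obtain x where "shoot_defect x = 0" using exists_positive_shoot_root by blast
  then have "eigenvalue tri_mat x" using eigenvalue_iff_defect_zero by simp
  then show ?thesis
    unfolding dom_eig_def using finite_eigenvalues eigenvalue_le_supersolution[OF assms]
    by (subst Max_le_iff) auto
qed

lemma balanced_shift:
  assumes bal: "\<And>k. k + 1 < n \<Longrightarrow> p (Suc k) * d (Suc k) = p k * c k"
  shows "(\<Sum>k<n. if 0 < k then p k * d k * v k * u (k - 1) else 0)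
       = (\<Sum>k<n. if k + 1 < n then p k * c k * u k * v (k + 1) else 0)"
proof -
  obtain m where n: "n = Suc m" using dim_ge_2 by (cases n) auto
  have "(\<Sum>k<n. if 0 < k then p k * d k * v k * u (k - 1) else 0)
      = (\<Sum>j<m. p (Suc j) * d (Suc j) * v (Suc j) * u j)"
    unfolding n sum.lessThan_Suc_shift by simp
  also have "\<dots> = (\<Sum>j<m. p j * c j * u j * v (Suc j))"
    by (rule sum.cong) (use bal n in auto)
  also have "\<dots> = (\<Sum>k<n. if k + 1 < n then p k * c k * u k * v (k + 1) else 0)"
    unfolding n by (simp add: sum.lessThan_Suc)
  finally show ?thesis .
qed

lemma weighted_pairing_symmetric:
  assumes "\<And>k. k + 1 < n \<Longrightarrow> p (Suc k) * d (Suc k) = p k * c k"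
  shows "(\<Sum>k<n. p k * v k * tri_act u k) = (\<Sum>k<n. p k * u k * tri_act v k)"
proof -
  have expand: "(\<Sum>k<n. p k * v k * tri_act u k) = (\<Sum>k<n. p k * a k * u k * v k)
     + (\<Sum>k<n. if 0 < k then p k * d k * v k * u (k - 1) else 0)
     + (\<Sum>k<n. if k + 1 < n then p k * c k * v k * u (k + 1) else 0)" for u v
    unfolding tri_act_def sum.distrib[symmetric] by (rule sum.cong) (auto simp: algebra_simps)
  show ?thesis
    unfolding expand
    using balanced_shift[OF assms, of v u] balanced_shift[OF assms, of u v] by (simp add: ac_simps)
qed

lemma subsolution_le_positive_root:
  assumes root: "shoot_defect x = 0" and shoot_pos: "\<And>k. k < n \<Longrightarrow> 0 < shoot x k"
    and w_nonneg: "\<And>k. k < n \<Longrightarrow> 0 \<le> w k" and "i < n" "0 < w i"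
    and w_sub: "\<And>k. k < n \<Longrightarrow> r * w k \<le> tri_act w k"
    and p_pos: "\<And>k. k < n \<Longrightarrow> 0 < p k"
    and bal: "\<And>k. k + 1 < n \<Longrightarrow> p (Suc k) * d (Suc k) = p k * c k"
  shows "r \<le> x"
proof -
  define S where "S = (\<Sum>k<n. p k * w k * shoot x k)"
  have nonneg: "0 \<le> p k" "0 \<le> shoot x k" if "k < n" for k
    using p_pos shoot_pos that less_imp_le by auto
  have "0 < S" unfolding S_def
    by (rule sum_pos2[of _ i]) (use assms nonneg in auto)
  have "r * S = (\<Sum>k<n. p k * shoot x k * (r * w k))"
    unfolding S_def sum_distrib_left by (simp add: ac_simps)
  also have "\<dots> \<le> (\<Sum>k<n. p k * shoot x k * tri_act w k)"
    by (rule sum_mono) (use w_sub nonneg in \<open>auto intro!: mult_left_mono\<close>)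
  also have "\<dots> = (\<Sum>k<n. p k * w k * tri_act (shoot x) k)"
    by (rule weighted_pairing_symmetric[OF bal])
  also have "\<dots> = x * S"
    unfolding S_def sum_distrib_left by (rule sum.cong) (simp_all add: tri_act_shoot root)
  finally show ?thesis using \<open>0 < S\<close> by simp
qed

lemma subsolution_le_dom_eig:
  assumes "\<And>k. k < n \<Longrightarrow> 0 \<le> w k" "i < n" "0 < w i"
    and "\<And>k. k < n \<Longrightarrow> r * w k \<le> tri_act w k"
    and "\<And>k. k < n \<Longrightarrow> 0 < p k"
    and "\<And>k. k + 1 < n \<Longrightarrow> p (Suc k) * d (Suc k) = p k * c k"
  shows "r \<le> dom_eig tri_mat"
proof -
  obtain x where x: "shoot_defect x = 0" "\<And>k. k < n \<Longrightarrow> 0 < shoot x k"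
    using exists_positive_shoot_root by blast
  then have "eigenvalue tri_mat x" using eigenvalue_iff_defect_zero by simp
  then have "x \<le> dom_eig tri_mat"
    unfolding dom_eig_def using finite_eigenvalues by simp
  moreover have "r \<le> x" using subsolution_le_positive_root[OF x assms] .
  ultimately show ?thesis by simp
qed

end

section \<open>The quasispecies matrix\<close>

text \<open>Row \<open>j \<ge> 1\<close> of the supersolution inequality for \<open>x ^ j\<close>, divided by
  \<open>x ^ (j - 1)\<close>.\<close>

lemma radial_upper_ineq:
  fixes \<mu> x A j :: real
  assumes "0 < \<mu>" "0 < x" "x < 1" "\<mu> * x\<^sup>2 + 2 * x - \<mu> = 0" "1 \<le> j"
  shows "- 2 * A * \<mu> * x + \<mu> * (A + 1 - j) + \<mu> * (A + 1 + j) * x\<^sup>2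
    \<le> (2 * A * (1 - \<mu> + \<mu> * x) + 2 * \<mu>) * x"
proof -
  have "- 2 * A * \<mu> * x + \<mu> * (A + 1 - j) + \<mu> * (A + 1 + j) * x\<^sup>2
      - (2 * A * (1 - \<mu> + \<mu> * x) + 2 * \<mu>) * x
    = (j + 1 - A) * (\<mu> * x\<^sup>2 + 2 * x - \<mu>) + (2 * \<mu> - 2 * (\<mu> * x) - 2 * ((j + 1) * x))"
    by (simp add: algebra_simps power2_eq_square)
  also have "\<dots> = 2 * \<mu> - 2 * (\<mu> * x) - 2 * ((j + 1) * x)"
    by (simp only: assms(4) mult_zero_right add_0_left)
  finally have diff: "- 2 * A * \<mu> * x + \<mu> * (A + 1 - j) + \<mu> * (A + 1 + j) * x\<^sup>2
      - (2 * A * (1 - \<mu> + \<mu> * x) + 2 * \<mu>) * x = 2 * \<mu> - 2 * (\<mu> * x) - 2 * ((j + 1) * x)" .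
  have "2 * x \<le> (j + 1) * x" using assms by simp
  moreover have "\<mu> * x\<^sup>2 = \<mu> - 2 * x" using assms(4) by simp
  moreover have "\<mu> * x\<^sup>2 \<le> \<mu> * x" using assms by (simp add: power2_eq_square)
  ultimately show ?thesis using diff by linarith
qed

text \<open>The profile vanishes at \<open>K + 1\<close> as well, so the cut at \<open>K\<close> costs nothing
  in the row equations next to it.\<close>

definition trunc_profile :: "real \<Rightarrow> nat \<Rightarrow> nat \<Rightarrow> real" where
  "trunc_profile y K j = (if j \<le> K then y ^ j - y ^ (2 * K + 2 - j) else 0)"

lemma trunc_profile_eq:
  assumes "j \<le> K + 1"
  shows "trunc_profile y K j = y ^ j - y ^ (2 * K + 2 - j)"
proof (cases "j \<le> K")
  case False
  then have "2 * K + 2 - j = j" using assms by auto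
  then show ?thesis using False by (simp add: trunc_profile_def)
qed (simp add: trunc_profile_def)

lemma trunc_profile_nonneg:
  assumes "0 < y" "y < 1"
  shows "0 \<le> trunc_profile y K j"
  using assms by (auto simp: trunc_profile_def intro: power_decreasing)

lemma trunc_profile_0_pos:
  assumes "0 < y" "y < 1"
  shows "0 < trunc_profile y K 0"
  using assms power_Suc_less_one[of y "2 * K + 1"] by (simp add: trunc_profile_def)

text \<open>Row \<open>j\<close> of the subsolution inequality for \<open>trunc_profile y K\<close>, in terms of
  \<open>P = y ^ (j - 1)\<close> and \<open>Q = y ^ (2 K + 1 - j)\<close>.\<close>

lemma radial_lower_ineq:
  fixes \<mu> y j K A P Q :: real
  assumes mu: "0 < \<mu>" and y: "0 < y" "y < 1" and j: "1 \<le> j" "j \<le> K"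
    and P: "0 < P" and Q: "0 \<le> Q" "Q \<le> P * y\<^sup>2"
  shows "((\<mu> * A * (1 - y)\<^sup>2 - \<mu> * K / (1 - y\<^sup>2)) / y) * (P * y - Q * y)
    \<le> - 2 * A * \<mu> * (P * y - Q * y) + \<mu> * (A + 1 - j) * (P - Q * y\<^sup>2)
      + \<mu> * (A + 1 + j) * (P * y\<^sup>2 - Q)"
proof -
  have y2: "0 < 1 - y\<^sup>2" using y by (simp add: power_less_one_iff)
  have lhs: "((\<mu> * A * (1 - y)\<^sup>2 - \<mu> * K / (1 - y\<^sup>2)) / y) * (P * y - Q * y)
      = \<mu> * A * (1 - y)\<^sup>2 * (P - Q) - \<mu> * (K * ((P - Q) / (1 - y\<^sup>2)))"
    using y by (simp add: field_simps)
  have rhs: "- 2 * A * \<mu> * (P * y - Q * y) + \<mu> * (A + 1 - j) * (P - Q * y\<^sup>2)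
      + \<mu> * (A + 1 + j) * (P * y\<^sup>2 - Q)
    = \<mu> * A * (1 - y)\<^sup>2 * (P - Q) - \<mu> * ((j - 1) * (P - Q * y\<^sup>2))
      + \<mu> * ((1 + j) * (P * y\<^sup>2 - Q))"
    by (simp add: algebra_simps power2_eq_square)
  have outward: "0 \<le> \<mu> * ((1 + j) * (P * y\<^sup>2 - Q))" using mu j Q by simp
  have "(j - 1) * (P - Q * y\<^sup>2) \<le> K * P"
  proof -
    have "(j - 1) * (P - Q * y\<^sup>2) \<le> (j - 1) * P" using j Q by (intro mult_left_mono) auto
    also have "\<dots> \<le> K * P" using j P by (intro mult_right_mono) auto
    finally show ?thesis .
  qed
  moreover have "K * P \<le> K * ((P - Q) / (1 - y\<^sup>2))"
  proof -
    have "P * (1 - y\<^sup>2) \<le> P - Q" using Q by (simp add: algebra_simps)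
    then have "P \<le> (P - Q) / (1 - y\<^sup>2)" using y2 by (simp add: field_simps)
    then show ?thesis using j by (intro mult_left_mono) auto
  qed
  ultimately have inward: "\<mu> * ((j - 1) * (P - Q * y\<^sup>2)) \<le> \<mu> * (K * ((P - Q) / (1 - y\<^sup>2)))"
    using mu by (intro mult_left_mono) auto
  show ?thesis unfolding lhs rhs using outward inward by linarith
qed

locale quasispecies =
  fixes A :: nat and \<mu> :: real
  assumes A_pos: "1 \<le> A" and mu_pos: "0 < \<mu>"
begin

sublocale tridiagonal "2 * A + 1" "\<lambda>k. fit A k - 2 * real A * \<mu>"
  "\<lambda>k. \<mu> * (real k + 1)" "\<lambda>k. \<mu> * (2 * real A + 1 - real k)"
  by unfold_locales (use A_pos mu_pos in auto)

lemma mbar_eq_dom_eig: "mbar A \<mu> = dom_eig tri_mat"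
proof -
  have "M_mat A + \<mu> \<cdot>\<^sub>m Q_mat (2 * A) = tri_mat"
    unfolding tri_mat_def
    by (rule eq_matI) (auto simp: M_mat_def Q_mat_def fit_def algebra_simps of_nat_diff)
  then show ?thesis unfolding mbar_def by simp
qed

definition peak_dist :: "nat \<Rightarrow> nat" where
  "peak_dist k = (if A \<le> k then k - A else A - k)"

lemma tri_act_radial_peak:
  "tri_act (\<lambda>i. f (peak_dist i)) A = 2 * real A * (1 - \<mu>) * f 0 + 2 * \<mu> * (real A + 1) * f 1"
proof -
  have "peak_dist A = 0" "peak_dist (A - 1) = 1" "peak_dist (A + 1) = 1"
    using A_pos by (auto simp: peak_dist_def)
  then show ?thesis
    using A_pos unfolding tri_act_def by (simp add: fit_def of_nat_diff algebra_simps)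
qed

lemma tri_act_radial_off_peak:
  assumes "k < 2 * A + 1" "k \<noteq> A" "peak_dist k = j"
  shows "tri_act (\<lambda>i. f (peak_dist i)) k = - 2 * real A * \<mu> * f j
    + \<mu> * (real A + 1 - real j) * f (j - 1)
    + (if j < A then \<mu> * (real A + 1 + real j) * f (j + 1) else 0)"
proof (cases "A < k")
  case True
  then have "k = A + j" "1 \<le> j" "peak_dist (k - 1) = j - 1" "peak_dist (k + 1) = j + 1"
    using assms by (auto simp: peak_dist_def)
  then show ?thesis
    using assms(1,3) unfolding tri_act_def by (simp add: fit_def of_nat_diff algebra_simps)
next
  case False
  then have "A = k + j" "1 \<le> j" "0 < k \<Longrightarrow> peak_dist (k - 1) = j + 1"
    "peak_dist (k + 1) = j - 1"
    using assms by (auto simp: peak_dist_def)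
  then show ?thesis
    using assms(2,3) unfolding tri_act_def by (auto simp: fit_def of_nat_diff algebra_simps)
qed

lemma peak_dist_pos: "k \<noteq> A \<Longrightarrow> 1 \<le> peak_dist k"
  by (auto simp: peak_dist_def)

lemma peak_dist_le: "k < 2 * A + 1 \<Longrightarrow> peak_dist k \<le> A"
  by (auto simp: peak_dist_def)

lemma radial_supersolution:
  assumes x: "0 < x" "x < 1" "\<mu> * x\<^sup>2 + 2 * x - \<mu> = 0" and k: "k < 2 * A + 1"
  shows "tri_act (\<lambda>i. x ^ peak_dist i) k
    \<le> (2 * real A * (1 - \<mu> + \<mu> * x) + 2 * \<mu>) * x ^ peak_dist k"
proof (cases "k = A")
  case True
  have "2 * real A * (1 - \<mu>) + 2 * \<mu> * (real A + 1) * x \<le> 2 * real A * (1 - \<mu> + \<mu> * x) + 2 * \<mu>"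
    using mu_pos x by (simp add: algebra_simps)
  then show ?thesis
    using True tri_act_radial_peak[of "\<lambda>j. x ^ j"] by (simp add: peak_dist_def)
next
  case False
  define j where "j = peak_dist k"
  obtain i where i: "j = Suc i"
    using peak_dist_pos[OF False] unfolding j_def by (cases "peak_dist k") auto
  have "0 \<le> \<mu> * (real A + 1 + real j) * x ^ (j + 1)" using mu_pos x by simp
  then have "tri_act (\<lambda>i. x ^ peak_dist i) k \<le> - 2 * real A * \<mu> * x ^ j
      + \<mu> * (real A + 1 - real j) * x ^ (j - 1) + \<mu> * (real A + 1 + real j) * x ^ (j + 1)"
    using tri_act_radial_off_peak[OF k False j_def[symmetric], where f = "\<lambda>j. x ^ j"] by simp
  also have "\<dots> = x ^ i * (- 2 * real A * \<mu> * x + \<mu> * (real A + 1 - real j)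
      + \<mu> * (real A + 1 + real j) * x\<^sup>2)"
    by (simp add: i algebra_simps power2_eq_square)
  also have "\<dots> \<le> x ^ i * ((2 * real A * (1 - \<mu> + \<mu> * x) + 2 * \<mu>) * x)"
    using radial_upper_ineq[OF mu_pos x, of "real j" "real A"] i x by (intro mult_left_mono) auto
  finally show ?thesis unfolding j_def[symmetric] i by (simp add: algebra_simps)
qed

lemma mbar_le:
  assumes "0 < x" "x < 1" "\<mu> * x\<^sup>2 + 2 * x - \<mu> = 0"
  shows "mbar A \<mu> \<le> 2 * real A * (1 - \<mu> + \<mu> * x) + 2 * \<mu>"
  unfolding mbar_eq_dom_eig
  by (rule dom_eig_le_supersolution[of "\<lambda>i. x ^ peak_dist i"])
    (use assms radial_supersolution in auto)

lemma radial_subsolution_peak: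
  assumes y: "0 < y" "y < 1"
    and r: "r \<le> 2 * real A * (1 - \<mu> + \<mu> * y - \<mu> * y ^ (2 * K + 1))"
  shows "r * trunc_profile y K (peak_dist A) \<le> tri_act (\<lambda>i. trunc_profile y K (peak_dist i)) A"
proof -
  define Z where "Z = y ^ (2 * K + 1)"
  have Z: "0 \<le> Z" "Z \<le> y"
    unfolding Z_def using y power_decreasing[of 1 "2 * K + 1" y] by auto
  have f0: "trunc_profile y K 0 = 1 - Z * y" and f1: "trunc_profile y K 1 = y - Z"
    using trunc_profile_eq[of 0 K y] trunc_profile_eq[of 1 K y] by (simp_all add: Z_def)
  have "tri_act (\<lambda>i. trunc_profile y K (peak_dist i)) A
      - 2 * real A * (1 - \<mu> + \<mu> * y - \<mu> * Z) * (1 - Z * y)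
    = 2 * \<mu> * (y - Z) * (1 + real A * Z * y)"
    unfolding tri_act_radial_peak f0 f1 by (simp add: algebra_simps)
  moreover have "0 \<le> 2 * \<mu> * (y - Z) * (1 + real A * Z * y)"
    using mu_pos Z y by simp
  moreover have "r * (1 - Z * y) \<le> 2 * real A * (1 - \<mu> + \<mu> * y - \<mu> * Z) * (1 - Z * y)"
    using r Z y unfolding Z_def[symmetric] by (intro mult_right_mono) (auto intro: mult_le_one)
  ultimately show ?thesis
    using f0 by (simp add: peak_dist_def)
qed

lemma radial_subsolution_inner:
  assumes y: "0 < y" "y < 1" and K: "K < A" and k: "k < 2 * A + 1" "k \<noteq> A"
    and j: "peak_dist k = j" "j \<le> K"
    and r: "r \<le> (\<mu> * real A * (1 - y)\<^sup>2 - \<mu> * real K / (1 - y\<^sup>2)) / y"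
  shows "r * trunc_profile y K j \<le> tri_act (\<lambda>i. trunc_profile y K (peak_dist i)) k"
proof -
  obtain i where i: "j = Suc i" using peak_dist_pos[OF k(2)] j(1) by (cases j) auto
  define m where "m = 2 * K + 1 - j"
  have exps: "2 * K + 2 - i = m + 2" "2 * K + 2 - Suc i = m + 1" "2 * K + 2 - (Suc i + 1) = m"
    "i + 2 \<le> m"
    using j(2) unfolding m_def i by auto
  define P where "P = y ^ i"
  define Q where "Q = y ^ m"
  have PQ: "0 < P" "0 \<le> Q" "Q \<le> P * y\<^sup>2"
    using y power_decreasing[OF exps(4), of y] unfolding P_def Q_def
    by (auto simp: power_add power2_eq_square ac_simps)
  have f: "trunc_profile y K i = P - Q * y\<^sup>2" "trunc_profile y K j = P * y - Q * y"
    "trunc_profile y K (j + 1) = P * y\<^sup>2 - Q"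
    using trunc_profile_eq[of i K y] trunc_profile_eq[of j K y] trunc_profile_eq[of "j + 1" K y] j(2)
    unfolding i exps P_def Q_def by (simp_all add: power_add power2_eq_square algebra_simps)
  have "r * trunc_profile y K j \<le> (\<mu> * real A * (1 - y)\<^sup>2 - \<mu> * real K / (1 - y\<^sup>2)) / y * (P * y - Q * y)"
    unfolding f(2)
  proof (rule mult_right_mono)
    have "y\<^sup>2 \<le> 1" using y by (simp add: power_le_one)
    then have "P * y\<^sup>2 \<le> P * 1" using PQ(1) by (intro mult_left_mono) auto
    then have "0 \<le> (P - Q) * y" using PQ(3) y by simp
    then show "0 \<le> P * y - Q * y" by (simp add: algebra_simps)
  qed (fact r)
  also have "\<dots> \<le> - 2 * real A * \<mu> * (P * y - Q * y) + \<mu> * (real A + 1 - real j) * (P - Q * y\<^sup>2)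
      + \<mu> * (real A + 1 + real j) * (P * y\<^sup>2 - Q)"
    using radial_lower_ineq[OF mu_pos y _ _ PQ, of "real j" "real K" "real A"] i j(2) by simp
  also have "\<dots> = tri_act (\<lambda>i. trunc_profile y K (peak_dist i)) k"
    using tri_act_radial_off_peak[OF k j(1)] f j(2) K unfolding i by simp
  finally show ?thesis .
qed

lemma radial_subsolution_cut:
  assumes y: "0 < y" "y < 1" and k: "k < 2 * A + 1" and cut: "K < peak_dist k"
  shows "r * trunc_profile y K (peak_dist k) \<le> tri_act (\<lambda>i. trunc_profile y K (peak_dist i)) k"
proof -
  have "k \<noteq> A" using cut by (auto simp: peak_dist_def)
  moreover have "real (peak_dist k) \<le> real A" using peak_dist_le[OF k] by simp
  ultimately show ?thesis
    using tri_act_radial_off_peak[OF k _ refl, of "trunc_profile y K"] cut mu_pos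
      trunc_profile_nonneg[OF y] by (simp add: trunc_profile_def)
qed

lemma reciprocal_binomial_balance:
  assumes "k + 1 < 2 * A + 1"
  shows "1 / real (2 * A choose Suc k) * (\<mu> * (2 * real A + 1 - real (Suc k)))
    = 1 / real (2 * A choose k) * (\<mu> * (real k + 1))"
proof -
  have "(2 * A - k) * (2 * A choose k) = Suc k * (2 * A choose Suc k)"
    using binomial_absorb_comp[of "2 * A" k] binomial_absorption[of k "2 * A"] by simp
  then have "real ((2 * A - k) * (2 * A choose k)) = real (Suc k * (2 * A choose Suc k))"
    by (rule arg_cong)
  then have "(2 * real A - real k) * real (2 * A choose k) = (real k + 1) * real (2 * A choose Suc k)"
    using assms by (simp add: of_nat_diff algebra_simps)
  moreover have "0 < real (2 * A choose k)" "0 < real (2 * A choose Suc k)"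
    using assms by simp_all
  ultimately show ?thesis by (simp add: field_simps)
qed

lemma mbar_ge:
  assumes y: "0 < y" "y < 1" and K: "K < A"
    and r1: "r \<le> 2 * real A * (1 - \<mu> + \<mu> * y - \<mu> * y ^ (2 * K + 1))"
    and r2: "r \<le> (\<mu> * real A * (1 - y)\<^sup>2 - \<mu> * real K / (1 - y\<^sup>2)) / y"
  shows "r \<le> mbar A \<mu>"
proof -
  have sub: "r * trunc_profile y K (peak_dist k) \<le> tri_act (\<lambda>i. trunc_profile y K (peak_dist i)) k"
    if "k < 2 * A + 1" for k
  proof -
    consider "k = A" | "K < peak_dist k" | "k \<noteq> A" "peak_dist k \<le> K" by linarith
    then show ?thesis
      using radial_subsolution_peak[OF y r1] radial_subsolution_cut[OF y that]
        radial_subsolution_inner[OF y K that _ refl _ r2] by cases auto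
  qed
  show ?thesis
    unfolding mbar_eq_dom_eig
  proof (rule subsolution_le_dom_eig[of "\<lambda>i. trunc_profile y K (peak_dist i)" A r
        "\<lambda>k. 1 / real (2 * A choose k)"])
    show "0 < trunc_profile y K (peak_dist A)"
      using trunc_profile_0_pos[OF y] by (simp add: peak_dist_def)
  qed (use trunc_profile_nonneg[OF y] sub reciprocal_binomial_balance in auto)
qed

end

lemma eigenvalues_upper_triangular:
  fixes B :: "'a :: field mat"
  assumes "B \<in> carrier_mat n n" "upper_triangular B"
  shows "{k. eigenvalue B k} = set (diag_mat B)"
  using eigenvalue_root_char_poly[OF assms(1)] char_poly_upper_triangular[OF assms]
  by (auto simp: poly_prod_list prod_list_zero_iff o_def)

lemma mbar_zero_mu:
  assumes "1 \<le> A"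
  shows "mbar A 0 = real (2 * A)"
proof -
  have M: "M_mat A \<in> carrier_mat (2 * A + 1) (2 * A + 1)" "upper_triangular (M_mat A)"
    by (auto simp: M_mat_def upper_triangular_def)
  have "set (diag_mat (M_mat A)) = fit A ` {0..<2 * A + 1}"
    unfolding diag_mat_def set_map set_upt by (rule image_cong) (auto simp: M_mat_def)
  moreover have "M_mat A + 0 \<cdot>\<^sub>m Q_mat (2 * A) = M_mat A"
    by (rule eq_matI) (auto simp: M_mat_def Q_mat_def)
  moreover have "Max (fit A ` {0..<2 * A + 1}) = real (2 * A)"
    by (rule Max_eqI) (auto simp: fit_def intro!: image_eqI[of _ _ A])
  ultimately show ?thesis
    using eigenvalues_upper_triangular[OF M] unfolding mbar_def dom_eig_def by simp
qed

section \<open>Asymptotics\<close>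

lemma quasispecies_root:
  fixes \<mu> :: real
  assumes mu: "0 < \<mu>"
  obtains x where "0 < x" "x < 1" "\<mu> * x\<^sup>2 + 2 * x - \<mu> = 0"
    "sqrt (\<mu>\<^sup>2 + 1) - \<mu> = 1 - \<mu> + \<mu> * x"
proof
  define s where "s = sqrt (\<mu>\<^sup>2 + 1)"
  have s2: "s\<^sup>2 = \<mu>\<^sup>2 + 1" unfolding s_def by simp
  have "1 < s" unfolding s_def using mu by (simp add: real_less_rsqrt)
  moreover have "s < \<mu> + 1"
  proof -
    have "s < sqrt ((\<mu> + 1)\<^sup>2)"
      unfolding s_def using mu by (intro real_sqrt_less_mono) (simp add: power2_eq_square algebra_simps)
    then show ?thesis using mu by simp
  qed
  ultimately show "0 < (s - 1) / \<mu>" "(s - 1) / \<mu> < 1"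
    using mu by simp_all
  show "\<mu> * ((s - 1) / \<mu>)\<^sup>2 + 2 * ((s - 1) / \<mu>) - \<mu> = 0"
    using mu s2 by (simp add: field_simps power2_eq_square)
  show "sqrt (\<mu>\<^sup>2 + 1) - \<mu> = 1 - \<mu> + \<mu> * ((s - 1) / \<mu>)"
    using mu unfolding s_def by simp
qed

lemma below_root_ineq:
  fixes \<mu> x y :: real
  assumes "0 < \<mu>" "0 < y" "y \<le> x" "\<mu> * x\<^sup>2 + 2 * x - \<mu> = 0"
  shows "1 - \<mu> + \<mu> * y \<le> \<mu> * (1 - y)\<^sup>2 / (2 * y)"
proof -
  have "\<mu> * y\<^sup>2 + 2 * y \<le> \<mu> * x\<^sup>2 + 2 * x"
    using assms by (intro add_mono mult_left_mono power_mono) auto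
  then have "2 * y * (1 - \<mu> + \<mu> * y) \<le> \<mu> * (1 - y)\<^sup>2"
    using assms(4) by (simp add: algebra_simps power2_eq_square)
  then show ?thesis using assms(2) by (simp add: field_simps)
qed

lemma rbar_le:
  assumes "1 \<le> A" "0 < \<mu>" "0 < x" "x < 1" "\<mu> * x\<^sup>2 + 2 * x - \<mu> = 0"
  shows "rbar A \<mu> \<le> 1 - \<mu> + \<mu> * x + \<mu> / real A"
proof -
  interpret quasispecies A \<mu> by unfold_locales (use assms in auto)
  have "2 * real A * (1 - \<mu> + \<mu> * x) + 2 * \<mu> = 2 * real A * (1 - \<mu> + \<mu> * x + \<mu> / real A)"
    using assms(1) by (simp add: field_simps)
  then have "mbar A \<mu> \<le> 2 * real A * (1 - \<mu> + \<mu> * x + \<mu> / real A)"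
    using mbar_le[OF assms(3-5)] by simp
  moreover have "0 < 2 * real A" using assms(1) by simp
  ultimately show ?thesis unfolding rbar_def by (simp add: pos_divide_le_eq mult.commute)
qed

lemma rbar_ge:
  assumes "1 \<le> A" "0 < \<mu>" "0 < y" "y < 1" "K < A"
  shows "min (1 - \<mu> + \<mu> * y - \<mu> * y ^ (2 * K + 1))
      (\<mu> * (1 - y)\<^sup>2 / (2 * y) - \<mu> * real K / (2 * real A * y * (1 - y\<^sup>2))) \<le> rbar A \<mu>"
    (is "min ?t1 ?t2 \<le> _")
proof -
  interpret quasispecies A \<mu> by unfold_locales (use assms in auto)
  have A: "0 < real A" using assms(1) by simp
  have "0 < 1 - y\<^sup>2" using assms(3,4) by (simp add: power_less_one_iff)
  then have "(\<mu> * real A * (1 - y)\<^sup>2 - \<mu> * real K / (1 - y\<^sup>2)) / y = 2 * real A * ?t2"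
    using A assms(3) by (simp add: field_simps)
  then have "2 * real A * min ?t1 ?t2 \<le> mbar A \<mu>"
    using A by (intro mbar_ge[OF assms(3-5)]) (auto intro: mult_left_mono)
  moreover have "0 < 2 * real A" using A by simp
  ultimately show ?thesis unfolding rbar_def by (simp add: pos_le_divide_eq mult.commute)
qed

lemma eventually_rbar_lt:
  assumes "0 < \<mu>" "sqrt (\<mu>\<^sup>2 + 1) - \<mu> < a"
  shows "\<forall>\<^sub>F A in sequentially. rbar A \<mu> < a"
proof -
  obtain x where x: "0 < x" "x < 1" "\<mu> * x\<^sup>2 + 2 * x - \<mu> = 0"
    and r: "sqrt (\<mu>\<^sup>2 + 1) - \<mu> = 1 - \<mu> + \<mu> * x"
    using quasispecies_root[OF assms(1)] by blast
  have "\<forall>\<^sub>F A in sequentially. \<mu> / real A < a - (1 - \<mu> + \<mu> * x)"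
    using lim_const_over_n[of \<mu>] assms(2) r by (intro order_tendstoD(2)) auto
  moreover have "\<forall>\<^sub>F A in sequentially. 1 \<le> A" by (rule eventually_ge_at_top)
  ultimately show ?thesis
    by eventually_elim (use rbar_le[OF _ assms(1) x] in fastforce)
qed

text \<open>The two estimates of \<open>rbar_ge\<close> agree at \<open>y = x\<close>: choose \<open>y\<close>
  slightly below \<open>x\<close>, then \<open>K\<close> large.\<close>

lemma lower_estimate_parameters:
  fixes \<mu> x e :: real
  assumes mu: "0 < \<mu>" and x: "0 < x" "x < 1" "\<mu> * x\<^sup>2 + 2 * x - \<mu> = 0" and e: "0 < e"
  obtains y K where "0 < y" "y < 1"
    "1 - \<mu> + \<mu> * x - 2 * e < 1 - \<mu> + \<mu> * y - \<mu> * y ^ (2 * K + 1)"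
    "1 - \<mu> + \<mu> * x - e \<le> \<mu> * (1 - y)\<^sup>2 / (2 * y)"
proof -
  define \<delta> where "\<delta> = min (x / 2) (e / \<mu>)"
  define y where "y = x - \<delta>"
  have "\<delta> \<le> x / 2" unfolding \<delta>_def by (rule min.cobounded1)
  moreover have "0 < \<delta>" using x e mu unfolding \<delta>_def by simp
  ultimately have y: "0 < y" "y \<le> x" "y < 1" using x unfolding y_def by auto
  have "\<mu> * \<delta> \<le> \<mu> * (e / \<mu>)" using mu by (intro mult_left_mono) (auto simp: \<delta>_def)
  then have close: "\<mu> * x - \<mu> * y \<le> e" using mu unfolding y_def by (simp add: right_diff_distrib)
  obtain K where K: "y ^ K < e / \<mu>"
    using real_arch_pow_inv[of "e / \<mu>" y] e mu y by auto
  have "\<mu> * y ^ (2 * K + 1) \<le> \<mu> * y ^ K"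
    using mu y by (intro mult_left_mono power_decreasing) auto
  also have "\<dots> < e" using K mu by (simp add: field_simps)
  finally have "1 - \<mu> + \<mu> * x - 2 * e < 1 - \<mu> + \<mu> * y - \<mu> * y ^ (2 * K + 1)"
    using close by linarith
  moreover have "1 - \<mu> + \<mu> * x - e \<le> \<mu> * (1 - y)\<^sup>2 / (2 * y)"
    using below_root_ineq[OF mu y(1,2) x(3)] close by linarith
  ultimately show ?thesis using that y(1,3) by blast
qed

lemma eventually_rbar_gt:
  assumes mu: "0 < \<mu>" and a: "a < sqrt (\<mu>\<^sup>2 + 1) - \<mu>"
  shows "\<forall>\<^sub>F A in sequentially. a < rbar A \<mu>"
proof -
  obtain x where x: "0 < x" "x < 1" "\<mu> * x\<^sup>2 + 2 * x - \<mu> = 0"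
    and r: "sqrt (\<mu>\<^sup>2 + 1) - \<mu> = 1 - \<mu> + \<mu> * x"
    using quasispecies_root[OF mu] by blast
  define e where "e = (1 - \<mu> + \<mu> * x - a) / 4"
  have e: "0 < e" and a_le: "a < 1 - \<mu> + \<mu> * x - 2 * e"
    using a r unfolding e_def by (simp_all add: field_simps)
  obtain y K where y: "0 < y" "y < 1"
    and t1: "1 - \<mu> + \<mu> * x - 2 * e < 1 - \<mu> + \<mu> * y - \<mu> * y ^ (2 * K + 1)"
    and t2: "1 - \<mu> + \<mu> * x - e \<le> \<mu> * (1 - y)\<^sup>2 / (2 * y)"
    using lower_estimate_parameters[OF mu x e] by blast
  have "\<forall>\<^sub>F A in sequentially. \<mu> * real K / (2 * y * (1 - y\<^sup>2)) / real A < e"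
    by (rule order_tendstoD(2)[OF lim_const_over_n e])
  moreover have "\<forall>\<^sub>F A in sequentially. K < A \<and> 1 \<le> A"
    using eventually_gt_at_top eventually_ge_at_top eventually_conj by blast
  ultimately show ?thesis
  proof eventually_elim
    case (elim A)
    have "\<mu> * real K / (2 * real A * y * (1 - y\<^sup>2)) = \<mu> * real K / (2 * y * (1 - y\<^sup>2)) / real A"
      by (simp add: mult_ac)
    then have "1 - \<mu> + \<mu> * x - 2 * e
        < \<mu> * (1 - y)\<^sup>2 / (2 * y) - \<mu> * real K / (2 * real A * y * (1 - y\<^sup>2))"
      using elim t2 by linarith
    then show ?case using rbar_ge[of A \<mu> y K] elim t1 a_le mu y by simp
  qed
qed

theorem proposition3:
  fixes \<mu> :: real
  assumes "\<mu> \<ge> 0"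
  shows "(\<lambda>A. rbar A \<mu>) \<longlonglongrightarrow> sqrt (\<mu>\<^sup>2 + 1) - \<mu>"
proof (cases "\<mu> = 0")
  case True
  have "\<forall>\<^sub>F A in sequentially. rbar A \<mu> = 1"
    using eventually_ge_at_top[of 1] by eventually_elim (simp add: True rbar_def mbar_zero_mu)
  then show ?thesis using True by (simp add: tendsto_eventually)
next
  case False
  with assms have "0 < \<mu>" by simp
  then show ?thesis
    by (intro order_tendstoI eventually_rbar_gt eventually_rbar_lt)
qed

end
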